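(* Let $\mathcal{I}$ be a $\sigma$-ideal on $\mathbb{R}$ satisfying the standing assumptions, and let $L\subseteq\mathbb{R}$ be an $\mathcal{I}$-Luzin set. Then $L+\mathbb{Q}=\{l+q: l\in L, q\in\mathbb{Q}\}$ is a strong $\mathcal{I}$-Luzin set.
   Context: Standing assumptions on $\mathcal{I}$: $\mathcal{I}$ is a $\sigma$-ideal of subsets of $\mathbb{R}$ such that $\mathbb{R}\notin\mathcal{I}$; $x+I\in\mathcal{I}$ and $xI\in\mathcal{I}$ for all $x\in\mathbb{R}$, $I\in\mathcal{I}$; every member of $\mathcal{I}$ is contained in a Borel member of $\mathcal{I}$; and for all Borel $A,B\notin\mathcal{I}$ the set $A-B$ has nonempty interior. A set $L\subseteq\mathbb{R}$ is $\mathcal{I}$-Luzin if $|L|=\mathfrak{c}$ and $L\cap I$ is countable for every $I\in\mathcal{I}$; it is strong $\mathcal{I}$-Luzin if moreover $L\cap B$ is uncountable for every Borel set $B\notin\mathcal{I}$. *)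

theory Defs
  imports "HOL-Analysis.Analysis" "HOL-Library.Equipollence"
begin

definition sigma_ideal :: "real set set \<Rightarrow> bool" where
  "sigma_ideal \<I> \<longleftrightarrow>
     {} \<in> \<I> \<and>
     (\<forall>A B. A \<in> \<I> \<and> B \<subseteq> A \<longrightarrow> B \<in> \<I>) \<and>
     (\<forall>F::nat \<Rightarrow> real set. (\<forall>n. F n \<in> \<I>) \<longrightarrow> (\<Union>n. F n) \<in> \<I>)"

definition standing_assumptions :: "real set set \<Rightarrow> bool" where
  "standing_assumptions \<I> \<longleftrightarrow>
     sigma_ideal \<I> \<and>
     (UNIV :: real set) \<notin> \<I> \<and>
     (\<forall>x. \<forall>I\<in>\<I>. (\<lambda>y. x + y) ` I \<in> \<I> \<and> (\<lambda>y. x * y) ` I \<in> \<I>) \<and>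
     (\<forall>I\<in>\<I>. \<exists>B\<in>\<I>. B \<in> sets borel \<and> I \<subseteq> B) \<and>
     (\<forall>A B. A \<in> sets borel \<and> B \<in> sets borel \<and> A \<notin> \<I> \<and> B \<notin> \<I> \<longrightarrow>
        interior {a - b | a b. a \<in> A \<and> b \<in> B} \<noteq> {})"

definition I_Luzin :: "real set set \<Rightarrow> real set \<Rightarrow> bool" where
  "I_Luzin \<I> L \<longleftrightarrow> L \<approx> (UNIV :: real set) \<and> (\<forall>I\<in>\<I>. countable (L \<inter> I))"

definition strong_I_Luzin :: "real set set \<Rightarrow> real set \<Rightarrow> bool" where
  "strong_I_Luzin \<I> L \<longleftrightarrow> I_Luzin \<I> L \<and>
     (\<forall>B. B \<in> sets borel \<and> B \<notin> \<I> \<longrightarrow> uncountable (L \<inter> B))"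

end

theory Submission
  imports Defs
begin

(* Write  L + Q  for the rational hull of L.  Membership in L + Q
   is invariant under rational translations, and L + Q is the union of
   countably many translates of L; since the ideal is translation invariant,
   L + Q meets each small set in a countable set and is again of size
   continuum, i.e. it is I-Luzin.
   For strength, the key fact is a zero-one law: a Borel set invariant under
   rational translations is either small or has small complement.  (If both
   it and its complement were large, their difference set would contain an
   interval, hence a rational r = a - b with a inside and b outside; but then
   b = a + (-r) is inside.)  Given a large Borel B with countable trace on
   L + Q, the set A = B - (L + Q) is large and Borel, so A + Q is a large
   rationally invariant Borel set; its complement is therefore small, yet it
   contains L + Q, hence L, which forces L to be countable -- a contradiction. *)

lemma standing_sigma_ideal: "standing_assumptions \<I> \<Longrightarrow> sigma_ideal \<I>"
  by (simp add: standing_assumptions_def)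

lemma standing_ideal_subset:
  assumes "standing_assumptions \<I>" "X \<in> \<I>" "Y \<subseteq> X"
  shows "Y \<in> \<I>"
  using standing_sigma_ideal[OF assms(1)] assms(2,3) unfolding sigma_ideal_def by blast

lemma standing_ideal_countable_Union:
  assumes "standing_assumptions \<I>" "\<And>n::nat. F n \<in> \<I>"
  shows "(\<Union>n. F n) \<in> \<I>"
  using standing_sigma_ideal[OF assms(1)] assms(2) unfolding sigma_ideal_def by blast

lemma standing_ideal_Un:
  assumes sa: "standing_assumptions \<I>" and "X \<in> \<I>" "Y \<in> \<I>"
  shows "X \<union> Y \<in> \<I>"
proof -
  define F where "F = (\<lambda>n::nat. if n = 0 then X else Y)"
  have "(\<Union>n. F n) \<in> \<I>"
    using assms(2,3) by (intro standing_ideal_countable_Union[OF sa]) (simp add: F_def)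
  moreover have "X \<union> Y = (\<Union>n. F n)"
    unfolding F_def by (auto intro: exI[of _ 0] exI[of _ 1])
  ultimately show ?thesis by simp
qed

lemma standing_ideal_translate:
  assumes "standing_assumptions \<I>" "X \<in> \<I>"
  shows "(\<lambda>y. c + y) ` X \<in> \<I>"
  using assms unfolding standing_assumptions_def by blast

lemma standing_steinhaus:
  assumes "standing_assumptions \<I>" "A \<in> sets borel" "B \<in> sets borel" "A \<notin> \<I>" "B \<notin> \<I>"
  shows "interior {a - b | a b. a \<in> A \<and> b \<in> B} \<noteq> {}"
  using assms unfolding standing_assumptions_def by blast

(* Singletons are small: otherwise the Steinhaus property would give {0} - {0}
   nonempty interior.  Countable unions then make every countable set small. *)
lemma countable_in_ideal:
  assumes sa: "standing_assumptions \<I>" and E: "countable E"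
  shows "E \<in> \<I>"
proof -
  have zero: "{0::real} \<in> \<I>"
  proof (rule ccontr)
    assume "{0::real} \<notin> \<I>"
    then have "interior {a - b | a b. a \<in> {0::real} \<and> b \<in> {0}} \<noteq> {}"
      by (intro standing_steinhaus[OF sa]) simp_all
    moreover have "{a - b | a b. a \<in> {0::real} \<and> b \<in> {0}} = {0}" by auto
    ultimately show False by simp
  qed
  have sing: "{x} \<in> \<I>" for x :: real
    using standing_ideal_translate[OF sa zero, of x] by simp
  show ?thesis
  proof (cases "E = {}")
    case True
    then show ?thesis using standing_sigma_ideal[OF sa] by (simp add: sigma_ideal_def)
  next
    case False
    have "(\<Union>n. {from_nat_into E n}) \<in> \<I>"
      using sing by (rule standing_ideal_countable_Union[OF sa])
    moreover have "(\<Union>n. {from_nat_into E n}) = E"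
      using range_from_nat_into[OF False E] by auto
    ultimately show ?thesis by simp
  qed
qed

definition rat_hull :: "real set \<Rightarrow> real set" where
  "rat_hull A = {a + q | a q. a \<in> A \<and> q \<in> \<rat>}"

lemma rat_hull_iff: "x \<in> rat_hull A \<longleftrightarrow> (\<exists>q\<in>\<rat>. x - q \<in> A)"
proof
  assume "x \<in> rat_hull A"
  then obtain a q where "x = a + q" "a \<in> A" "q \<in> \<rat>" by (auto simp: rat_hull_def)
  then show "\<exists>q\<in>\<rat>. x - q \<in> A" by (intro bexI[of _ q]) simp_all
next
  assume "\<exists>q\<in>\<rat>. x - q \<in> A"
  then obtain q where "q \<in> \<rat>" "x - q \<in> A" by blast
  moreover have "x = (x - q) + q" by simp
  ultimately show "x \<in> rat_hull A" unfolding rat_hull_def by blast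
qed

lemma subset_rat_hull: "A \<subseteq> rat_hull A"
  by (auto simp: rat_hull_iff intro!: bexI[of _ 0])

lemma rat_hull_translate:
  assumes "x \<in> rat_hull A" "r \<in> \<rat>"
  shows "x + r \<in> rat_hull A"
proof -
  obtain q where "q \<in> \<rat>" "x - q \<in> A" using assms(1) by (auto simp: rat_hull_iff)
  moreover have "q + r \<in> \<rat>" using \<open>q \<in> \<rat>\<close> assms(2) by simp
  ultimately show ?thesis unfolding rat_hull_iff by (intro bexI[of _ "q + r"]) simp_all
qed

lemma rat_hull_disjoint:
  assumes "A \<inter> rat_hull L = {}"
  shows "rat_hull A \<inter> rat_hull L = {}"
proof -
  have "x \<notin> rat_hull L" if "x \<in> rat_hull A" for x
  proof
    assume "x \<in> rat_hull L"
    obtain q where "q \<in> \<rat>" "x - q \<in> A" using \<open>x \<in> rat_hull A\<close> by (auto simp: rat_hull_iff)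
    moreover have "x - q \<in> rat_hull L"
      using rat_hull_translate[OF \<open>x \<in> rat_hull L\<close>, of "- q"] \<open>q \<in> \<rat>\<close> by simp
    ultimately show False using assms by blast
  qed
  then show ?thesis by blast
qed

(* As a countable union of translates, the rational hull of a Borel set is Borel. *)
lemma rat_hull_borel:
  assumes "A \<in> sets borel"
  shows "rat_hull A \<in> sets borel"
proof -
  have "(\<lambda>y. y - q) -` A \<in> sets borel" for q :: real
    using measurable_sets[of "\<lambda>y. y - q" borel borel A] assms by simp
  then have "(\<Union>q\<in>\<rat>. (\<lambda>y. y - q) -` A) \<in> sets borel"
    by (rule sets.countable_UN''[OF countable_rat])
  moreover have "rat_hull A = (\<Union>q\<in>\<rat>. (\<lambda>y. y - q) -` A)"
    by (auto simp: rat_hull_iff)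
  ultimately show ?thesis by simp
qed

lemma rat_hull_countable_trace:
  assumes sa: "standing_assumptions \<I>" and Lc: "\<forall>I\<in>\<I>. countable (L \<inter> I)"
    and I: "I \<in> \<I>"
  shows "countable (rat_hull L \<inter> I)"
proof -
  have "rat_hull L \<inter> I \<subseteq> (\<Union>q\<in>\<rat>. (\<lambda>x. x + q) ` (L \<inter> (\<lambda>y. - q + y) ` I))"
  proof
    fix m assume "m \<in> rat_hull L \<inter> I"
    then obtain q where "q \<in> \<rat>" "m - q \<in> L" "m \<in> I" by (auto simp: rat_hull_iff)
    moreover have "m - q \<in> (\<lambda>y. - q + y) ` I" using \<open>m \<in> I\<close> by force
    moreover have "m = (m - q) + q" by simp
    ultimately show "m \<in> (\<Union>q\<in>\<rat>. (\<lambda>x. x + q) ` (L \<inter> (\<lambda>y. - q + y) ` I))"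
      by blast
  qed
  moreover have "countable ((\<lambda>x. x + q) ` (L \<inter> (\<lambda>y. - q + y) ` I))" for q
    using Lc standing_ideal_translate[OF sa I] by blast
  ultimately show ?thesis
    by (meson countable_UN[OF countable_rat] countable_subset)
qed

(* If a Borel set X is invariant under rational translations, then X or its
   complement is small: otherwise X - (-X) contains an open interval and hence
   a rational r = a - b with a \<in> X, b \<notin> X, while b = a + (-r) \<in> X. *)
lemma rat_invariant_zero_one:
  assumes sa: "standing_assumptions \<I>" and X: "X \<in> sets borel"
    and inv: "\<And>x q. x \<in> X \<Longrightarrow> q \<in> \<rat> \<Longrightarrow> x + q \<in> X"
  shows "X \<in> \<I> \<or> - X \<in> \<I>"
proof (rule ccontr)
  assume "\<not> (X \<in> \<I> \<or> - X \<in> \<I>)"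
  moreover have "- X \<in> sets borel" using X by (simp add: sets.compl_sets)
  ultimately have "interior {a - b | a b. a \<in> X \<and> b \<in> - X} \<noteq> {}"
    using standing_steinhaus[OF sa X] by blast
  then obtain x e where "e > 0" and ball: "ball x e \<subseteq> {a - b | a b. a \<in> X \<and> b \<in> - X}"
    by (meson equals0I mem_interior)
  obtain r where r: "r \<in> \<rat>" "x < r" "r < x + e"
    using Rats_dense_in_real[of x "x + e"] \<open>e > 0\<close> by auto
  then have "r \<in> ball x e" by (simp add: dist_real_def)
  then obtain a b where "r = a - b" "a \<in> X" "b \<notin> X" using ball by blast
  moreover have "a + - r \<in> X" using inv[OF \<open>a \<in> X\<close>, of "- r"] r(1) by simp
  ultimately show False by simp
qed

lemma eqpoll_UNIV_uncountable:
  assumes "L \<approx> (UNIV :: real set)"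
  shows "uncountable L"
  using assms uncountable_UNIV_real
  by (meson countable_lepoll eqpoll_imp_lepoll eqpoll_sym)

lemma rat_hull_I_Luzin:
  assumes sa: "standing_assumptions \<I>" and L: "I_Luzin \<I> L"
  shows "I_Luzin \<I> (rat_hull L)"
proof -
  have "(UNIV :: real set) \<lesssim> L"
    using L eqpoll_sym eqpoll_imp_lepoll unfolding I_Luzin_def by blast
  also have "L \<lesssim> rat_hull L" by (rule subset_imp_lepoll[OF subset_rat_hull])
  finally have "rat_hull L \<approx> (UNIV :: real set)"
    by (simp add: lepoll_antisym subset_imp_lepoll)
  then show ?thesis
    using rat_hull_countable_trace[OF sa] L unfolding I_Luzin_def by blast
qed

lemma rat_hull_uncountable_trace:
  assumes sa: "standing_assumptions \<I>" and L: "I_Luzin \<I> L"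
    and B: "B \<in> sets borel" "B \<notin> \<I>"
  shows "uncountable (rat_hull L \<inter> B)"
proof
  assume E: "countable (rat_hull L \<inter> B)"
  define A where "A = B - rat_hull L"
  have "rat_hull L \<inter> B \<in> sets borel"
    by (rule sets.countable[OF _ E]) (simp add: closed_singleton)
  moreover have "A = B - (rat_hull L \<inter> B)" unfolding A_def by blast
  ultimately have A_borel: "A \<in> sets borel" using B(1) by auto
  have A_large: "A \<notin> \<I>"
  proof
    assume "A \<in> \<I>"
    then have "A \<union> (rat_hull L \<inter> B) \<in> \<I>"
      using standing_ideal_Un[OF sa] countable_in_ideal[OF sa E] by blast
    moreover have "B = A \<union> (rat_hull L \<inter> B)" unfolding A_def by blast
    ultimately show False using B(2) by simp
  qed
  have "rat_hull A \<notin> \<I>"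
    using A_large standing_ideal_subset[OF sa _ subset_rat_hull] by blast
  then have small_compl: "- rat_hull A \<in> \<I>"
    using rat_invariant_zero_one[OF sa rat_hull_borel[OF A_borel] rat_hull_translate] by blast
  have "L \<subseteq> - rat_hull A"
    using rat_hull_disjoint[of A L] subset_rat_hull[of L] unfolding A_def by blast
  then have "L \<inter> - rat_hull A = L" by blast
  then have "countable L"
    using L small_compl unfolding I_Luzin_def by metis
  then show False using L eqpoll_UNIV_uncountable unfolding I_Luzin_def by blast
qed

theorem mainTheorem2:
  fixes \<I> :: "real set set" and L :: "real set"
  assumes "standing_assumptions \<I>"
    and "I_Luzin \<I> L"
  shows "strong_I_Luzin \<I> {l + q | l q. l \<in> L \<and> q \<in> \<rat>}"
  using rat_hull_I_Luzin[OF assms] rat_hull_uncountable_trace[OF assms]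
  unfolding strong_I_Luzin_def rat_hull_def[symmetric] by blast

end
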